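(* Let $\{(\phi^n,\mu^n,R^n,\xi^n)\}$ be generated by Scheme 2A and set $M:=R^0=\sqrt{E[\phi_{in}]}$. Then for all $n\ge0$: $0<R^{n+1}\le R^n\le M$ and $0<\xi^{n+1}\le\frac{M}{\sqrt{c_0}}$.
   Context: Standing setup: $\Omega\subset\mathbb{R}^d$ ($d=2,3$) is a bounded domain with smooth boundary and outward unit normal $\mathbf{n}$; $\|\cdot\|_0$ is the $L^2(\Omega)$ norm. Let $\lambda\ge 0$, $H(s)=\frac14(s^2-1)^2$, $h(s)=H'(s)=s^3-s$. Fix $c_0>0$ and define $E[\phi]=\int_\Omega\big(\tfrac12|\nabla\phi|^2+\tfrac{\lambda}{2}\phi^2+H(\phi)\big)dx+c_0$ (so $E[\phi]\ge c_0$). Time step $\Delta t>0$. Set $\phi^0=\phi_{in}$, $\mu^0=-\Delta\phi^0+\lambda\phi^0+h(\phi^0)$, $R^0=\sqrt{E[\phi^0]}$, $\phi^{-1}=\phi^0$, $\mu^{-1}=\mu^0$. Write $\bar\phi^n=2\phi^n-\phi^{n-1}$, $\tilde\phi^{n+1/2}=\frac32\phi^n-\frac12\phi^{n-1}$, $\tilde\mu^{n+1/2}=\frac32\mu^n-\frac12\mu^{n-1}$. Scheme 2A: for $n\ge0$, $\frac{3\phi^{n+1}-4\phi^n+\phi^{n-1}}{2\Delta t}=\Delta\mu^{n+1}$, $\mu^{n+1}=-\Delta\phi^{n+1}+\lambda\phi^{n+1}+|\xi^{n+1}|^2h(\bar\phi^n)$, $\frac{R^{n+1}-R^n}{\Delta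 t}=-\frac{\xi^{n+1}}{2\sqrt{E[\tilde\phi^{n+1/2}]}}\int_\Omega|\nabla\tilde\mu^{n+1/2}|^2dx$, with $\xi^{n+1}=R^{n+1}/\sqrt{E[\bar\phi^n]}$, and $\nabla\phi^{n+1}\cdot\mathbf{n}=\nabla\mu^{n+1}\cdot\mathbf{n}=0$ on $\partial\Omega$. *)

theory Defs
  imports "HOL-Analysis.Analysis"
begin

definition pd :: "('a::euclidean_space \<Rightarrow> real) \<Rightarrow> 'a \<Rightarrow> 'a \<Rightarrow> real" where
  "pd f b x = deriv (\<lambda>t. f (x + t *\<^sub>R b)) 0"

fun pds :: "'a::euclidean_space list \<Rightarrow> ('a \<Rightarrow> real) \<Rightarrow> 'a \<Rightarrow> real" where
  "pds [] f = f"
| "pds (b # bs) f = pd (pds bs f) b"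

definition grad :: "('a::euclidean_space \<Rightarrow> real) \<Rightarrow> 'a \<Rightarrow> 'a" where
  "grad f x = (\<Sum>b\<in>Basis. pd f b x *\<^sub>R b)"

definition lap :: "('a::euclidean_space \<Rightarrow> real) \<Rightarrow> 'a \<Rightarrow> real" where
  "lap f x = (\<Sum>b\<in>Basis. pds [b, b] f x)"

definition smooth_on :: "'a::euclidean_space set \<Rightarrow> ('a \<Rightarrow> real) \<Rightarrow> bool" where
  "smooth_on U f \<longleftrightarrow> (\<forall>bs. set bs \<subseteq> Basis \<longrightarrow> pds bs f differentiable_on U)"

definition C2_on :: "'a::euclidean_space set \<Rightarrow> ('a \<Rightarrow> real) \<Rightarrow> bool" where
  "C2_on U f \<longleftrightarrow> (\<forall>bs. set bs \<subseteq> Basis \<longrightarrow> length bs \<le> 1 \<longrightarrow> pds bs f differentiable_on U)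
      \<and> (\<forall>bs. set bs \<subseteq> Basis \<longrightarrow> length bs = 2 \<longrightarrow> continuous_on U (pds bs f))"

definition outward_normal :: "'a::euclidean_space set \<Rightarrow> 'a \<Rightarrow> 'a \<Rightarrow> bool" where
  "outward_normal \<Omega> x \<nu> \<longleftrightarrow>
     (\<exists>U g. open U \<and> x \<in> U \<and> smooth_on U g \<and> (\<forall>y\<in>U. grad g y \<noteq> 0)
        \<and> \<Omega> \<inter> U = {y\<in>U. g y < 0} \<and> \<nu> = (1 / norm (grad g x)) *\<^sub>R grad g x)"

definition smooth_bounded_domain :: "'a::euclidean_space set \<Rightarrow> bool" where
  "smooth_bounded_domain \<Omega> \<longleftrightarrow> open \<Omega> \<and> connected \<Omega> \<and> \<Omega> \<noteq> {} \<and> bounded \<Omega>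
     \<and> (\<forall>x\<in>frontier \<Omega>. \<exists>\<nu>. outward_normal \<Omega> x \<nu>)"

definition Hpot :: "real \<Rightarrow> real" where "Hpot s = (s\<^sup>2 - 1)\<^sup>2 / 4"
definition hpot :: "real \<Rightarrow> real" where "hpot s = s ^ 3 - s"

definition energy :: "'a::euclidean_space set \<Rightarrow> real \<Rightarrow> real \<Rightarrow> ('a \<Rightarrow> real) \<Rightarrow> real" where
  "energy \<Omega> lam c0 f =
     integral \<Omega> (\<lambda>x. (norm (grad f x))\<^sup>2 / 2 + lam / 2 * (f x)\<^sup>2 + Hpot (f x)) + c0"

text \<open>Index shift implementing the convention phi^{-1} = phi^0 (value at n-1, with -1 read as 0).\<close>
definition prev :: "(nat \<Rightarrow> 'b) \<Rightarrow> nat \<Rightarrow> 'b" where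
  "prev u n = (if n = 0 then u 0 else u (n - 1))"

definition bar :: "(nat \<Rightarrow> 'a \<Rightarrow> real) \<Rightarrow> nat \<Rightarrow> 'a \<Rightarrow> real" where
  "bar u n = (\<lambda>x. 2 * u n x - prev u n x)"

definition tilde :: "(nat \<Rightarrow> 'a \<Rightarrow> real) \<Rightarrow> nat \<Rightarrow> 'a \<Rightarrow> real" where
  "tilde u n = (\<lambda>x. 3 / 2 * u n x - 1 / 2 * prev u n x)"

definition scheme2A ::
  "'a::euclidean_space set \<Rightarrow> real \<Rightarrow> real \<Rightarrow> real \<Rightarrow> ('a \<Rightarrow> real)
   \<Rightarrow> (nat \<Rightarrow> 'a \<Rightarrow> real) \<Rightarrow> (nat \<Rightarrow> 'a \<Rightarrow> real) \<Rightarrow> (nat \<Rightarrow> real) \<Rightarrow> (nat \<Rightarrow> real) \<Rightarrow> bool" where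
  "scheme2A \<Omega> lam c0 dt phi_in \<phi> \<mu> R \<xi> \<longleftrightarrow>
     \<phi> 0 = phi_in
   \<and> (\<forall>x\<in>\<Omega>. \<mu> 0 x = - lap (\<phi> 0) x + lam * \<phi> 0 x + hpot (\<phi> 0 x))
   \<and> R 0 = sqrt (energy \<Omega> lam c0 (\<phi> 0))
   \<and> (\<forall>n. \<forall>x\<in>\<Omega>.
        (3 * \<phi> (Suc n) x - 4 * \<phi> n x + prev \<phi> n x) / (2 * dt) = lap (\<mu> (Suc n)) x)
   \<and> (\<forall>n. \<forall>x\<in>\<Omega>.
        \<mu> (Suc n) x = - lap (\<phi> (Suc n)) x + lam * \<phi> (Suc n) x
                      + (\<bar>\<xi> (Suc n)\<bar>)\<^sup>2 * hpot (bar \<phi> n x))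
   \<and> (\<forall>n. (R (Suc n) - R n) / dt =
        - \<xi> (Suc n) / (2 * sqrt (energy \<Omega> lam c0 (tilde \<phi> n)))
          * integral \<Omega> (\<lambda>x. (norm (grad (tilde \<mu> n) x))\<^sup>2))
   \<and> (\<forall>n. \<xi> (Suc n) = R (Suc n) / sqrt (energy \<Omega> lam c0 (bar \<phi> n)))
   \<and> (\<forall>n. \<forall>x\<in>frontier \<Omega>. \<forall>\<nu>. outward_normal \<Omega> x \<nu> \<longrightarrow>
        grad (\<phi> (Suc n)) x \<bullet> \<nu> = 0 \<and> grad (\<mu> (Suc n)) x \<bullet> \<nu> = 0)"

end

theory Submission
  imports Defs
begin

text \<open>The update for the auxiliary variable is linearly implicit in \<open>R\<^sup>n\<^sup>+\<^sup>1\<close>: it reads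
  \<open>R\<^sup>n\<^sup>+\<^sup>1 (1 + K\<^sub>n) = R\<^sup>n\<close> with \<open>K\<^sub>n \<ge> 0\<close>, since \<open>\<xi>\<^sup>n\<^sup>+\<^sup>1\<close> is \<open>R\<^sup>n\<^sup>+\<^sup>1\<close> divided by a positive
  square root of an energy and the integral of \<open>|\<nabla>\<mu>|\<^sup>2\<close> is nonnegative. Hence \<open>R\<^sup>n\<close> stays
  positive and decreases from \<open>R\<^sup>0 = M\<close>, and \<open>\<xi>\<^sup>n\<^sup>+\<^sup>1 \<le> M / \<surd>c\<^sub>0\<close> because every energy is at least \<open>c\<^sub>0\<close>.\<close>

text \<open>No integrability hypothesis: a non-integrable function has integral \<open>0\<close>.\<close>
lemma integral_nonneg_total:
  fixes f :: "'a::euclidean_space \<Rightarrow> real"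
  assumes "\<And>x. x \<in> S \<Longrightarrow> 0 \<le> f x"
  shows "0 \<le> integral S f"
proof (cases "f integrable_on S")
  case True
  then show ?thesis using assms by (simp add: integral_nonneg)
next
  case False
  then show ?thesis by (simp add: not_integrable_integral)
qed

lemma energy_ge_offset:
  assumes "lam \<ge> 0"
  shows "c0 \<le> energy \<Omega> lam c0 f"
proof -
  have "0 \<le> integral \<Omega> (\<lambda>x. (norm (grad f x))\<^sup>2 / 2 + lam / 2 * (f x)\<^sup>2 + Hpot (f x))"
    by (rule integral_nonneg_total) (use assms in \<open>auto simp: Hpot_def\<close>)
  then show ?thesis unfolding energy_def by simp
qed

lemma implicit_decay_step:
  fixes a b K :: real
  assumes "b - a = - b * K" and "K \<ge> 0" and "a > 0"
  shows "0 < b \<and> b \<le> a"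
proof -
  have "b = a / (1 + K)" using assms(1,2) by (simp add: field_simps)
  then show ?thesis using assms(2,3) by (simp add: divide_le_eq)
qed

lemma implicit_decay_positive_antimono:
  fixes R K :: "nat \<Rightarrow> real"
  assumes "R 0 > 0" and "\<And>n. R (Suc n) - R n = - R (Suc n) * K n" and "\<And>n. K n \<ge> 0"
  shows "0 < R (Suc n) \<and> R (Suc n) \<le> R n \<and> R n \<le> R 0"
proof (induction n)
  case 0
  then show ?case using implicit_decay_step[OF assms(2) assms(3) assms(1)] by simp
next
  case (Suc n)
  then show ?case using implicit_decay_step[OF assms(2) assms(3), of "Suc n"] by simp
qed

lemma scheme2A_auxiliary_implicit_decay:
  assumes "scheme2A \<Omega> lam c0 dt phi_in \<phi> \<mu> R \<xi>" and "lam \<ge> 0" and "c0 > 0" and "dt > 0"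
  obtains K :: "nat \<Rightarrow> real"
    where "\<And>m. K m \<ge> 0" and "\<And>m. R (Suc m) - R m = - R (Suc m) * K m"
proof -
  let ?E = "energy \<Omega> lam c0"
  let ?I = "\<lambda>m. integral \<Omega> (\<lambda>x. (norm (grad (tilde \<mu> m) x))\<^sup>2)"
  define K where "K m = dt * ?I m / (2 * sqrt (?E (tilde \<phi> m)) * sqrt (?E (bar \<phi> m)))" for m
  have sqrt_E_pos: "0 < sqrt (?E f)" for f
    using energy_ge_offset[OF assms(2), of c0 \<Omega> f] assms(3) by simp
  have "K m \<ge> 0" for m
    using assms(4) sqrt_E_pos
    by (auto simp: K_def intro!: integral_nonneg_total divide_nonneg_pos mult_nonneg_nonneg)
  moreover have "R (Suc m) - R m = - R (Suc m) * K m" for m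
  proof -
    have "(R (Suc m) - R m) / dt
            = - (R (Suc m) / sqrt (?E (bar \<phi> m))) / (2 * sqrt (?E (tilde \<phi> m))) * ?I m"
      using assms(1) unfolding scheme2A_def by metis
    then have "R (Suc m) - R m
            = dt * (- (R (Suc m) / sqrt (?E (bar \<phi> m))) / (2 * sqrt (?E (tilde \<phi> m))) * ?I m)"
      using assms(4) by (simp add: divide_eq_eq)
    then show ?thesis by (simp add: K_def mult_ac)
  qed
  ultimately show ?thesis using that by blast
qed

theorem mainTheorem12:
  fixes \<Omega> :: "'a::euclidean_space set"
    and lam c0 dt :: real
    and phi_in :: "'a \<Rightarrow> real"
    and \<phi> \<mu> :: "nat \<Rightarrow> 'a \<Rightarrow> real"
    and R \<xi> :: "nat \<Rightarrow> real"
    and U :: "'a set"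
  assumes "DIM('a) = 2 \<or> DIM('a) = 3"
    and "smooth_bounded_domain \<Omega>"
    and "lam \<ge> 0" and "c0 > 0" and "dt > 0"
    and "open U" and "closure \<Omega> \<subseteq> U"
    and "\<forall>n. C2_on U (\<phi> n) \<and> C2_on U (\<mu> n)"
    and "scheme2A \<Omega> lam c0 dt phi_in \<phi> \<mu> R \<xi>"
  shows "\<forall>n. 0 < R (Suc n) \<and> R (Suc n) \<le> R n \<and> R n \<le> sqrt (energy \<Omega> lam c0 phi_in)
            \<and> 0 < \<xi> (Suc n) \<and> \<xi> (Suc n) \<le> sqrt (energy \<Omega> lam c0 phi_in) / sqrt c0"
proof
  fix n
  let ?E = "energy \<Omega> lam c0" and ?M = "sqrt (energy \<Omega> lam c0 phi_in)"
  have sqrt_c0: "0 < sqrt c0" using assms(4) by simp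
  have sqrt_E: "sqrt c0 \<le> sqrt (?E f)" for f using energy_ge_offset[OF assms(3)] by simp
  have sqrt_E_pos: "0 < sqrt (?E f)" for f using sqrt_c0 sqrt_E by (rule less_le_trans)
  have R0: "R 0 = ?M" and xi: "\<xi> (Suc n) = R (Suc n) / sqrt (?E (bar \<phi> n))"
    using assms(9) unfolding scheme2A_def by simp_all
  obtain K where "\<And>m. K m \<ge> 0" and "\<And>m. R (Suc m) - R m = - R (Suc m) * K m"
    using scheme2A_auxiliary_implicit_decay assms(3-5,9) by blast
  then have R: "0 < R (Suc n) \<and> R (Suc n) \<le> R n \<and> R n \<le> ?M"
    using implicit_decay_positive_antimono[of R K] R0 sqrt_E_pos by simp
  moreover have "0 < \<xi> (Suc n)" using R sqrt_E_pos by (simp add: xi)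
  moreover have "\<xi> (Suc n) \<le> ?M / sqrt c0"
    unfolding xi using R sqrt_c0 sqrt_E[of "bar \<phi> n"] sqrt_E_pos[of phi_in]
    by (intro frac_le) auto
  ultimately show "0 < R (Suc n) \<and> R (Suc n) \<le> R n \<and> R n \<le> ?M
            \<and> 0 < \<xi> (Suc n) \<and> \<xi> (Suc n) \<le> ?M / sqrt c0" by blast
qed

end
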